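(* Let $G=(V,E)$ be a simple undirected graph with $V=\{1,\dots,|V|\}$, and let $t$ be the size of a maximum cut of $G$. Let $k=2|E||V|^2$ and construct the $(2k+|E|)\times 2|V|$ SNP matrix $M$ as follows. The first $k$ rows ($M_0$) consist of $|V|$ blocks of $k/|V|$ rows each; every row of the $j$-th block ($1\le j\le |V|$) has $0$ in columns $2j-1$ and $2j$ and holes everywhere else. The next $k$ rows ($M_1$) are defined identically but with $1$ instead of $0$. The final $|E|$ rows ($M_G$) correspond to the edges: for an edge $\{i,j\}$ with $i<j$, the row has $0$ in columns $2i-1,2i$, has $1$ in columns $2j-1,2j$, and for every $c\notin\{i,j\}$ has $0$ in column $2c-1$ and $1$ in column $2c$. Then $M$ is ungapped and $$\mathrm{Ungapped\text{-}MEC}(M)=|E|(|V|-2)+2(|E|-t).$$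
   Context: An SNP matrix is a matrix with entries in $\{0,1,-\}$, `-' being a hole. For $X\in\{0,1,-\}^m$, $Y\in\{0,1\}^m$, $d(X,Y)$ counts positions where one is 0 and the other 1 (holes do not count). A matrix is feasible if there exist $H_1,H_2\in\{0,1\}^m$ such that every row $r$ satisfies $d(r,H_1)=0$ or $d(r,H_2)=0$. A flip changes a 0 entry to 1 or a 1 entry to 0 (never to or from a hole). A matrix is ungapped if in every row all holes occur at the start or end of the row. $\mathrm{Ungapped\text{-}MEC}(M)$ is the minimum number of flips needed to make $M$ feasible. *)

theory Defs
  imports Main "HOL-Library.Product_Lexorder"
begin

datatype snp = Zero | One | Hole

text \<open>A row is a list of entries; a matrix is a list of rows (all of length m).
  Haplotypes are 0/1 strings, represented as bool lists (True = 1).\<close>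

definition snp_dist :: "snp list \<Rightarrow> bool list \<Rightarrow> nat" where
  "snp_dist X Y = card {i. i < length X \<and> i < length Y \<and>
      ((X ! i = Zero \<and> Y ! i) \<or> (X ! i = One \<and> \<not> Y ! i))}"

definition feasible :: "nat \<Rightarrow> snp list list \<Rightarrow> bool" where
  "feasible m M \<longleftrightarrow> (\<exists>H1 H2. length H1 = m \<and> length H2 = m \<and>
      (\<forall>r \<in> set M. snp_dist r H1 = 0 \<or> snp_dist r H2 = 0))"

definition flip_variant :: "snp list list \<Rightarrow> snp list list \<Rightarrow> bool" where
  "flip_variant M M' \<longleftrightarrow> list_all2 (\<lambda>r r'. length r = length r' \<and>
      (\<forall>c < length r. (r ! c = Hole) = (r' ! c = Hole))) M M'"

definition num_flips :: "snp list list \<Rightarrow> snp list list \<Rightarrow> nat" where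
  "num_flips M M' = (\<Sum>(r, r') \<leftarrow> zip M M'. card {c. c < length r \<and> r ! c \<noteq> r' ! c})"

definition ungapped_MEC :: "nat \<Rightarrow> snp list list \<Rightarrow> nat" where
  "ungapped_MEC m M = (LEAST f. \<exists>M'. flip_variant M M' \<and> feasible m M' \<and> num_flips M M' = f)"

definition ungapped :: "snp list list \<Rightarrow> bool" where
  "ungapped M \<longleftrightarrow> (\<forall>r \<in> set M. \<exists>a mid b. r = replicate a Hole @ mid @ replicate b Hole
      \<and> Hole \<notin> set mid)"

definition simple_graph :: "nat \<Rightarrow> nat set set \<Rightarrow> bool" where
  "simple_graph n E \<longleftrightarrow> (\<forall>e \<in> E. \<exists>i j. e = {i, j} \<and> i \<noteq> j \<and> i \<in> {1..n} \<and> j \<in> {1..n})"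

definition cut_size :: "nat set set \<Rightarrow> nat set \<Rightarrow> nat" where
  "cut_size E S = card {e \<in> E. \<exists>i j. e = {i, j} \<and> i \<in> S \<and> j \<notin> S}"

definition max_cut :: "nat \<Rightarrow> nat set set \<Rightarrow> nat" where
  "max_cut n E = Max {cut_size E S | S. S \<subseteq> {1..n}}"

text \<open>Columns are numbered 1..2n; column c is stored at list index c-1.\<close>

definition block_row :: "nat \<Rightarrow> snp \<Rightarrow> nat \<Rightarrow> snp list" where
  "block_row n x j = map (\<lambda>c. if c = 2*j - 1 \<or> c = 2*j then x else Hole) [1..<2*n+1]"

definition block_part :: "nat \<Rightarrow> nat \<Rightarrow> snp \<Rightarrow> snp list list" where
  "block_part n k x = concat (map (\<lambda>j. replicate (k div n) (block_row n x j)) [1..<n+1])"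

definition edge_row :: "nat \<Rightarrow> nat \<Rightarrow> nat \<Rightarrow> snp list" where
  "edge_row n i j = map (\<lambda>c. let v = (c + 1) div 2 in
      if v = i then Zero else if v = j then One else if odd c then Zero else One) [1..<2*n+1]"

definition edge_list :: "nat set set \<Rightarrow> (nat \<times> nat) list" where
  "edge_list E = sorted_list_of_set {(i, j). i < j \<and> {i, j} \<in> E}"

definition reduction_matrix :: "nat \<Rightarrow> nat set set \<Rightarrow> snp list list" where
  "reduction_matrix n E = (let k = 2 * card E * n^2 in
      block_part n k Zero @ block_part n k One @ map (\<lambda>(i, j). edge_row n i j) (edge_list E))"

end

(* Each vertex v owns the two columns 2v-1 and 2v. For fixed haplotypes H1, H2 the cheapest
   correction moves every row to the nearer haplotype, so Ungapped-MEC is the minimum over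
   haplotype pairs of the summed row distances. If on some vertex the pair is not of the form
   ((s, s), (~s, ~s)), then one of the 2|E||V| copies of a block row of v has positive distance
   to both haplotypes, which already costs 2|E||V|. Otherwise the pair encodes a vertex set S
   and its complement: block rows cost nothing, and an edge row costs |V| - 2 when the edge
   crosses the cut of S and |V| when it does not. Hence the optimum is |E||V| minus twice the
   maximum cut. *)
theory Submission
  imports Defs
begin

definition mismatch :: "snp \<Rightarrow> bool \<Rightarrow> bool" where
  "mismatch x b \<longleftrightarrow> (x = Zero \<and> b) \<or> (x = One \<and> \<not> b)"

lemma mismatch_simps [simp]:
  "mismatch Zero b = b" "mismatch One b = (\<not> b)" "\<not> mismatch Hole b"
  by (auto simp: mismatch_def)

lemma snp_dist_eq_sum:
  assumes "length Y = length X"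
  shows "snp_dist X Y = (\<Sum>i<length X. of_bool (mismatch (X ! i) (Y ! i)))"
proof -
  have "snp_dist X Y = card ({..<length X} \<inter> {i. mismatch (X ! i) (Y ! i)})"
    unfolding snp_dist_def mismatch_def using assms by (intro arg_cong[where f = card]) auto
  then show ?thesis
    by simp
qed

lemma sum_lessThan_double:
  fixes f :: "nat \<Rightarrow> 'a::comm_monoid_add"
  shows "(\<Sum>i<2 * n. f i) = (\<Sum>v<n. f (2 * v) + f (Suc (2 * v)))"
  by (induction n) (simp_all add: add.assoc)

lemma snp_dist_eq_sum_pairs:
  assumes "length X = 2 * n" "length Y = 2 * n"
  shows "snp_dist X Y = (\<Sum>v<n. of_bool (mismatch (X ! (2 * v)) (Y ! (2 * v)))
                              + of_bool (mismatch (X ! Suc (2 * v)) (Y ! Suc (2 * v))))"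
  using assms by (simp add: snp_dist_eq_sum sum_lessThan_double)

section \<open>Minimum error correction for fixed haplotypes\<close>

definition row_cost :: "bool list \<Rightarrow> bool list \<Rightarrow> snp list \<Rightarrow> nat" where
  "row_cost H1 H2 r = min (snp_dist r H1) (snp_dist r H2)"

definition matrix_cost :: "bool list \<Rightarrow> bool list \<Rightarrow> snp list list \<Rightarrow> nat" where
  "matrix_cost H1 H2 M = (\<Sum>r\<leftarrow>M. row_cost H1 H2 r)"

lemma matrix_cost_append [simp]:
  "matrix_cost H1 H2 (M @ N) = matrix_cost H1 H2 M + matrix_cost H1 H2 N"
  by (simp add: matrix_cost_def)

lemma num_flips_Nil [simp]: "num_flips [] [] = 0"
  by (simp add: num_flips_def)

lemma num_flips_Cons [simp]:
  "num_flips (r # M) (r' # M') =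
    card {c. c < length r \<and> r ! c \<noteq> r' ! c} + num_flips M M'"
  by (simp add: num_flips_def)

lemma snp_dist_le_flips:
  assumes "length r' = length r" "\<forall>c < length r. (r ! c = Hole) = (r' ! c = Hole)"
    and "snp_dist r' H = 0"
  shows "snp_dist r H \<le> card {c. c < length r \<and> r ! c \<noteq> r' ! c}"
proof -
  have "\<not> mismatch (r' ! c) (H ! c)" if "c < length r" "c < length H" for c
    using assms(1,3) that unfolding snp_dist_def mismatch_def by auto
  then have "r ! c \<noteq> r' ! c" if "c < length r" "c < length H" "mismatch (r ! c) (H ! c)" for c
    using that by metis
  then show ?thesis
    unfolding snp_dist_def by (intro card_mono) (auto simp: mismatch_def)
qed

lemma matrix_cost_le_num_flips:
  assumes "flip_variant M M'" and "\<forall>r \<in> set M'. snp_dist r H1 = 0 \<or> snp_dist r H2 = 0"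
  shows "matrix_cost H1 H2 M \<le> num_flips M M'"
  using assms unfolding flip_variant_def
proof (induction M M' rule: list_all2_induct)
  case Nil
  then show ?case
    by (simp add: matrix_cost_def)
next
  case (Cons r M r' M')
  have shape: "length r' = length r" "\<forall>c < length r. (r ! c = Hole) = (r' ! c = Hole)"
    using Cons.hyps(1) by auto
  have "snp_dist r H1 \<le> card {c. c < length r \<and> r ! c \<noteq> r' ! c}
      \<or> snp_dist r H2 \<le> card {c. c < length r \<and> r ! c \<noteq> r' ! c}"
    using Cons.prems snp_dist_le_flips[OF shape] by auto
  then have "row_cost H1 H2 r \<le> card {c. c < length r \<and> r ! c \<noteq> r' ! c}"
    unfolding row_cost_def min_le_iff_disj .
  then show ?case
    using Cons by (simp add: matrix_cost_def)
qed

definition correct_row :: "snp list \<Rightarrow> bool list \<Rightarrow> snp list" where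
  "correct_row r H =
    map (\<lambda>c. if r ! c = Hole then Hole else if H ! c then One else Zero) [0..<length r]"

lemma snp_dist_correct_row: "snp_dist (correct_row r H) H = 0"
  unfolding snp_dist_def correct_row_def by auto

lemma flips_correct_row:
  assumes "length H = length r"
  shows "card {c. c < length r \<and> r ! c \<noteq> correct_row r H ! c} = snp_dist r H"
proof -
  have "r ! c \<noteq> correct_row r H ! c \<longleftrightarrow> mismatch (r ! c) (H ! c)" if "c < length r" for c
    using that by (cases "r ! c") (auto simp: correct_row_def)
  then show ?thesis
    unfolding snp_dist_def using assms
    by (intro arg_cong[where f = card]) (auto simp: mismatch_def)
qed

definition correct_matrix :: "bool list \<Rightarrow> bool list \<Rightarrow> snp list list \<Rightarrow> snp list list"
  where
  "correct_matrix H1 H2 M =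
     map (\<lambda>r. if snp_dist r H1 \<le> snp_dist r H2 then correct_row r H1 else correct_row r H2) M"

lemma flip_variant_correct_matrix: "flip_variant M (correct_matrix H1 H2 M)"
  unfolding flip_variant_def correct_matrix_def list_all2_conv_all_nth
  by (auto simp: correct_row_def)

lemma feasible_correct_matrix:
  assumes "length H1 = m" "length H2 = m"
  shows "feasible m (correct_matrix H1 H2 M)"
  unfolding feasible_def correct_matrix_def using assms
  by (intro exI[of _ H1] exI[of _ H2]) (auto simp: snp_dist_correct_row)

lemma num_flips_correct_matrix:
  assumes "length H1 = m" "length H2 = m" "\<forall>r \<in> set M. length r = m"
  shows "num_flips M (correct_matrix H1 H2 M) = matrix_cost H1 H2 M"
  using assms(3)
  by (induction M)
    (auto simp: correct_matrix_def matrix_cost_def row_cost_def flips_correct_row assms(1,2))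

lemma ungapped_MEC_eqI:
  assumes "length H1 = m" "length H2 = m" "\<forall>r \<in> set M. length r = m"
    and optimal: "\<And>G1 G2. length G1 = m \<Longrightarrow> length G2 = m \<Longrightarrow>
      matrix_cost H1 H2 M \<le> matrix_cost G1 G2 M"
  shows "ungapped_MEC m M = matrix_cost H1 H2 M"
  unfolding ungapped_MEC_def
proof (rule Least_equality)
  show "\<exists>M'. flip_variant M M' \<and> feasible m M' \<and> num_flips M M' = matrix_cost H1 H2 M"
    using flip_variant_correct_matrix feasible_correct_matrix num_flips_correct_matrix assms(1-3)
    by blast
next
  fix f
  assume "\<exists>M'. flip_variant M M' \<and> feasible m M' \<and> num_flips M M' = f"
  then obtain M' G1 G2 where M': "flip_variant M M'" "num_flips M M' = f"
    and G: "length G1 = m" "length G2 = m" "\<forall>r \<in> set M'. snp_dist r G1 = 0 \<or> snp_dist r G2 = 0"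
    unfolding feasible_def by blast
  have "matrix_cost H1 H2 M \<le> matrix_cost G1 G2 M"
    using optimal[OF G(1,2)] .
  also have "\<dots> \<le> f"
    using matrix_cost_le_num_flips[OF M'(1) G(3)] M'(2) by simp
  finally show "matrix_cost H1 H2 M \<le> f" .
qed

lemma length_block_row [simp]: "length (block_row n x j) = 2 * n"
  by (simp add: block_row_def)

lemma length_edge_row [simp]: "length (edge_row n i j) = 2 * n"
  by (simp add: edge_row_def)

lemma nth_block_row:
  assumes "p < 2 * n" "1 \<le> j"
  shows "block_row n x j ! p = (if p div 2 = j - 1 then x else Hole)"
proof -
  have "(Suc p = 2 * j - 1 \<or> Suc p = 2 * j) \<longleftrightarrow> p div 2 = j - 1"
    using assms(2) by presburger
  then show ?thesis
    using assms(1) by (simp add: block_row_def nth_upt del: upt_Suc)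
qed

lemma nth_edge_row:
  assumes "p < 2 * n"
  shows "edge_row n i j ! p =
    (if p div 2 + 1 = i then Zero else if p div 2 + 1 = j then One
     else if even p then Zero else One)"
  using assms by (simp add: edge_row_def nth_upt Let_def del: upt_Suc)

lemma block_row_eq_replicate:
  assumes "v < n"
  shows "block_row n x (Suc v) =
    replicate (2 * v) Hole @ [x, x] @ replicate (2 * (n - Suc v)) Hole"
  using assms by (intro nth_equalityI) (auto simp: nth_block_row nth_append nth_Cons')

lemma Hole_notin_edge_row: "Hole \<notin> set (edge_row n i j)"
  by (auto simp: edge_row_def Let_def)

lemma block_part_eq:
  "block_part n k x = concat (map (\<lambda>v. replicate (k div n) (block_row n x (Suc v))) [0..<n])"
proof -
  have "[1..<n + 1] = map Suc [0..<n]"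
    by (simp add: map_Suc_upt del: upt_Suc)
  then show ?thesis
    unfolding block_part_def by (simp add: comp_def)
qed

lemma set_block_part: "set (block_part n k x) \<subseteq> {block_row n x (Suc v) | v. v < n}"
  by (auto simp: block_part_eq)

lemma reduction_matrix_rowE:
  assumes "r \<in> set (reduction_matrix n E)"
  obtains x v where "x \<in> {Zero, One}" "v < n" "r = block_row n x (Suc v)"
  | i j where "r = edge_row n i j"
proof -
  consider x where "x \<in> {Zero, One}" "r \<in> set (block_part n (2 * card E * n ^ 2) x)"
    | "r \<in> (\<lambda>(i, j). edge_row n i j) ` set (edge_list E)"
    using assms unfolding reduction_matrix_def Let_def by auto
  then show ?thesis
  proof cases
    case 1
    then show ?thesis
      using set_block_part that(1) by blast
  next
    case 2
    then show ?thesis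
      using that(2) by auto
  qed
qed

lemma ungapped_reduction_matrix: "ungapped (reduction_matrix n E)"
  unfolding ungapped_def
proof
  fix r
  assume "r \<in> set (reduction_matrix n E)"
  then show "\<exists>a mid b. r = replicate a Hole @ mid @ replicate b Hole \<and> Hole \<notin> set mid"
  proof (cases rule: reduction_matrix_rowE)
    case (1 x v)
    then show ?thesis
      by (intro exI[of _ "2 * v"] exI[of _ "[x, x]"] exI[of _ "2 * (n - Suc v)"])
        (auto simp: block_row_eq_replicate)
  next
    case (2 i j)
    then show ?thesis
      using Hole_notin_edge_row by (intro exI[of _ 0] exI[of _ r]) auto
  qed
qed

lemma length_reduction_matrix_row: "r \<in> set (reduction_matrix n E) \<Longrightarrow> length r = 2 * n"
  by (cases rule: reduction_matrix_rowE) auto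

section \<open>Haplotype pairs encoding a vertex set\<close>

definition side_haplotype :: "nat \<Rightarrow> nat set \<Rightarrow> bool list" where
  "side_haplotype n S = map (\<lambda>p. p div 2 + 1 \<in> S) [0..<2 * n]"

lemma length_side_haplotype [simp]: "length (side_haplotype n S) = 2 * n"
  by (simp add: side_haplotype_def)

lemma nth_side_haplotype: "p < 2 * n \<Longrightarrow> side_haplotype n S ! p \<longleftrightarrow> p div 2 + 1 \<in> S"
  by (simp add: side_haplotype_def)

lemma snp_dist_block_row:
  assumes "v < n" "length H = 2 * n"
  shows "snp_dist (block_row n x (Suc v)) H =
    of_bool (mismatch x (H ! (2 * v))) + of_bool (mismatch x (H ! Suc (2 * v)))"
proof -
  have "snp_dist (block_row n x (Suc v)) H = (\<Sum>u<n. if u = v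
      then of_bool (mismatch x (H ! (2 * u))) + of_bool (mismatch x (H ! Suc (2 * u))) else 0)"
    unfolding snp_dist_eq_sum_pairs[OF length_block_row assms(2)]
    by (intro sum.cong refl) (simp add: nth_block_row)
  then show ?thesis
    using assms(1) by simp
qed

lemma snp_dist_edge_row_side_haplotype:
  assumes "1 \<le> i" "i < j" "j \<le> n"
  shows "snp_dist (edge_row n i j) (side_haplotype n S) + 2 =
    n + 2 * of_bool (i \<in> S) + 2 * of_bool (j \<notin> S)"
proof -
  let ?H = "side_haplotype n S" and ?r = "edge_row n i j"
  let ?t = "\<lambda>u. of_bool (mismatch (?r ! (2 * u)) (?H ! (2 * u)))
              + of_bool (mismatch (?r ! Suc (2 * u)) (?H ! Suc (2 * u))) :: nat"
  have vertex: "?t u + (if u = i - 1 then 1 else 0) + (if u = j - 1 then 1 else 0) =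
      1 + (if u = i - 1 then 2 * of_bool (i \<in> S) else 0)
        + (if u = j - 1 then 2 * of_bool (j \<notin> S) else 0)"
    if "u < n" for u
    using that assms by (auto simp: nth_edge_row nth_side_haplotype)
  have endpoints: "i - 1 < n" "j - 1 < n"
    using assms by linarith+
  have "snp_dist ?r ?H + 2 =
      (\<Sum>u<n. ?t u + (if u = i - 1 then 1 else 0) + (if u = j - 1 then 1 else 0))"
    using endpoints by (simp add: snp_dist_eq_sum_pairs sum.distrib)
  also have "\<dots> = (\<Sum>u<n. 1 + (if u = i - 1 then 2 * of_bool (i \<in> S) else 0)
                        + (if u = j - 1 then 2 * of_bool (j \<notin> S) else 0))"
    using vertex by (intro sum.cong) auto
  also have "\<dots> = n + 2 * of_bool (i \<in> S) + 2 * of_bool (j \<notin> S)"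
    using endpoints by (simp only: sum.distrib) simp
  finally show ?thesis .
qed

lemma row_cost_edge_row_side_haplotypes:
  assumes "1 \<le> i" "i < j" "j \<le> n"
  shows "row_cost (side_haplotype n S) (side_haplotype n (- S)) (edge_row n i j)
    + 2 * of_bool ((i \<in> S) \<noteq> (j \<in> S)) = n"
  using snp_dist_edge_row_side_haplotype[OF assms, of S]
    snp_dist_edge_row_side_haplotype[OF assms, of "- S"]
  unfolding row_cost_def by (cases "i \<in> S"; cases "j \<in> S") auto

lemma row_cost_block_row_side_haplotypes:
  assumes "v < n"
  shows "row_cost (side_haplotype n S) (side_haplotype n (- S)) (block_row n x (Suc v)) = 0"
  using assms unfolding row_cost_def
  by (cases x; cases "Suc v \<in> S") (simp_all add: snp_dist_block_row nth_side_haplotype)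

text \<open>A Zero block row of cost 0 forces one haplotype to be 0 on both columns of the vertex, a
  One block row of cost 0 forces one of them to be 1 on both columns.\<close>

lemma complementary_columns_if_block_costs_zero:
  assumes "v < n" "length H1 = 2 * n" "length H2 = 2 * n"
    and "row_cost H1 H2 (block_row n Zero (Suc v)) = 0"
    and "row_cost H1 H2 (block_row n One (Suc v)) = 0"
  shows "H1 ! Suc (2 * v) = H1 ! (2 * v) \<and> H2 ! (2 * v) = (\<not> H1 ! (2 * v))
    \<and> H2 ! Suc (2 * v) = (\<not> H1 ! (2 * v))"
  using assms unfolding row_cost_def
  by (cases "H1 ! (2 * v)"; cases "H1 ! Suc (2 * v)"; cases "H2 ! (2 * v)";
      cases "H2 ! Suc (2 * v)")
    (simp_all add: snp_dist_block_row)

lemma side_haplotypes_if_block_costs_zero: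
  assumes "length H1 = 2 * n" "length H2 = 2 * n"
    and "\<forall>v < n. \<forall>x \<in> {Zero, One}. row_cost H1 H2 (block_row n x (Suc v)) = 0"
  obtains S where "S \<subseteq> {1..n}" "H1 = side_haplotype n S" "H2 = side_haplotype n (- S)"
proof
  define S where "S = {u \<in> {1..n}. H1 ! (2 * u - 2)}"
  have columns: "H1 ! p = (p div 2 + 1 \<in> S) \<and> H2 ! p = (p div 2 + 1 \<notin> S)"
    if "p < 2 * n" for p
  proof -
    have "p div 2 < n"
      using that by linarith
    then have "H1 ! p = H1 ! (2 * (p div 2)) \<and> H2 ! p = (\<not> H1 ! (2 * (p div 2)))"
      using complementary_columns_if_block_costs_zero[OF _ assms(1,2)] assms(3)
      by (cases "even p") (auto elim!: evenE oddE)
    then show ?thesis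
      using \<open>p div 2 < n\<close> by (simp add: S_def)
  qed
  show "S \<subseteq> {1..n}"
    by (auto simp: S_def)
  show "H1 = side_haplotype n S" "H2 = side_haplotype n (- S)"
    using assms(1,2) columns by (auto intro!: nth_equalityI simp: nth_side_haplotype)
qed

definition edge_pairs :: "nat set set \<Rightarrow> (nat \<times> nat) set" where
  "edge_pairs E = {(i, j). i < j \<and> {i, j} \<in> E}"

lemma edge_list_eq: "edge_list E = sorted_list_of_set (edge_pairs E)"
  by (simp add: edge_list_def edge_pairs_def)

lemma edge_pairs_bounds:
  assumes "simple_graph n E" "(i, j) \<in> edge_pairs E"
  shows "1 \<le> i \<and> i < j \<and> j \<le> n"
  using assms unfolding simple_graph_def edge_pairs_def by (fastforce simp: doubleton_eq_iff)

lemma finite_edge_pairs: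
  assumes "simple_graph n E"
  shows "finite (edge_pairs E)"
proof (rule finite_subset)
  show "edge_pairs E \<subseteq> {1..n} \<times> {1..n}"
    using edge_pairs_bounds[OF assms] by fastforce
qed simp

lemma bij_betw_edge_pairs:
  assumes "simple_graph n E"
  shows "bij_betw (\<lambda>(i, j). {i, j}) (edge_pairs E) E"
proof (rule bij_betw_imageI)
  show "inj_on (\<lambda>(i, j). {i, j}) (edge_pairs E)"
    by (auto simp: inj_on_def edge_pairs_def doubleton_eq_iff)
  show "(\<lambda>(i, j). {i, j}) ` edge_pairs E = E"
  proof
    show "E \<subseteq> (\<lambda>(i, j). {i, j}) ` edge_pairs E"
    proof
      fix e
      assume "e \<in> E"
      then obtain i j where "e = {i, j}" "i \<noteq> j"
        using assms unfolding simple_graph_def by blast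
      then show "e \<in> (\<lambda>(i, j). {i, j}) ` edge_pairs E"
        using \<open>e \<in> E\<close> unfolding edge_pairs_def
        by (cases "i < j") (auto simp: insert_commute intro!: image_eqI[of _ _ "(min i j, max i j)"])
    qed
  qed (auto simp: edge_pairs_def)
qed

lemma cut_size_eq_card_edge_pairs:
  assumes "simple_graph n E"
  shows "cut_size E S = card {(i, j) \<in> edge_pairs E. (i \<in> S) \<noteq> (j \<in> S)}"
proof -
  have "bij_betw (\<lambda>(i, j). {i, j}) {p \<in> edge_pairs E. (\<lambda>(i, j). (i \<in> S) \<noteq> (j \<in> S)) p}
      {e \<in> E. \<exists>a b. e = {a, b} \<and> a \<in> S \<and> b \<notin> S}"
    by (rule bij_betw_Collect[OF bij_betw_edge_pairs[OF assms]]) (auto simp: doubleton_eq_iff)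
  then show ?thesis
    unfolding cut_size_def by (simp add: bij_betw_same_card split_def)
qed

lemma cut_size_le_max_cut: "S \<subseteq> {1..n} \<Longrightarrow> cut_size E S \<le> max_cut n E"
  unfolding max_cut_def by (rule Max_ge) auto

lemma max_cut_attained:
  obtains S where "S \<subseteq> {1..n}" "cut_size E S = max_cut n E"
proof -
  have cuts: "{cut_size E S | S. S \<subseteq> {1..n}} = cut_size E ` Pow {1..n}"
    by auto
  have "max_cut n E \<in> cut_size E ` Pow {1..n}"
    unfolding max_cut_def cuts by (rule Max_in) auto
  then show ?thesis
    using that by auto
qed

lemma sum_list_concat: "sum_list (concat xss) = sum_list (map sum_list xss)"
  by (induction xss) simp_all

lemma matrix_cost_block_part:
  "matrix_cost H1 H2 (block_part n k x) =
    k div n * (\<Sum>v<n. row_cost H1 H2 (block_row n x (Suc v)))"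
  by (simp add: matrix_cost_def block_part_eq map_concat sum_list_concat comp_def
      sum_list_replicate interv_sum_list_conv_sum_set_nat atLeast0LessThan sum_distrib_left)

lemma matrix_cost_reduction_matrix:
  "matrix_cost H1 H2 (reduction_matrix n E) =
     (\<Sum>x\<leftarrow>[Zero, One]. matrix_cost H1 H2 (block_part n (2 * card E * n ^ 2) x))
     + (\<Sum>(i, j)\<in>edge_pairs E. row_cost H1 H2 (edge_row n i j))"
proof -
  have "(\<Sum>r\<leftarrow>map (\<lambda>(i, j). edge_row n i j) (edge_list E). row_cost H1 H2 r) =
      (\<Sum>(i, j)\<in>edge_pairs E. row_cost H1 H2 (edge_row n i j))"
    by (cases "finite (edge_pairs E)")
      (simp_all add: edge_list_eq sum.distinct_set_conv_list[symmetric] comp_def split_def)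
  then show ?thesis
    unfolding reduction_matrix_def Let_def by (simp add: matrix_cost_def)
qed

lemma matrix_cost_side_haplotypes:
  assumes "simple_graph n E"
  shows "matrix_cost (side_haplotype n S) (side_haplotype n (- S)) (reduction_matrix n E)
    + 2 * cut_size E S = n * card E"
proof -
  let ?cost = "row_cost (side_haplotype n S) (side_haplotype n (- S))"
  have blocks: "matrix_cost (side_haplotype n S) (side_haplotype n (- S)) (block_part n k x) = 0"
    for k x
    by (simp add: matrix_cost_block_part row_cost_block_row_side_haplotypes)
  have "2 * cut_size E S = (\<Sum>(i, j)\<in>edge_pairs E. 2 * of_bool ((i \<in> S) \<noteq> (j \<in> S)))"
    using finite_edge_pairs[OF assms]
    by (simp add: cut_size_eq_card_edge_pairs[OF assms] sum_distrib_left[symmetric]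
        split_def Int_def)
  then have "matrix_cost (side_haplotype n S) (side_haplotype n (- S)) (reduction_matrix n E)
      + 2 * cut_size E S =
      (\<Sum>(i, j)\<in>edge_pairs E. ?cost (edge_row n i j) + 2 * of_bool ((i \<in> S) \<noteq> (j \<in> S)))"
    by (simp add: matrix_cost_reduction_matrix blocks sum.distrib split_def)
  also have "\<dots> = (\<Sum>(i, j)\<in>edge_pairs E. n)"
    using edge_pairs_bounds[OF assms] row_cost_edge_row_side_haplotypes
    by (intro sum.cong) auto
  also have "\<dots> = n * card E"
    using bij_betw_same_card[OF bij_betw_edge_pairs[OF assms]] by simp
  finally show ?thesis .
qed

lemma matrix_cost_reduction_matrix_lower:
  assumes "simple_graph n E" "length H1 = 2 * n" "length H2 = 2 * n"
  shows "n * card E \<le> matrix_cost H1 H2 (reduction_matrix n E) + 2 * max_cut n E"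
proof (cases "\<forall>v < n. \<forall>x \<in> {Zero, One}. row_cost H1 H2 (block_row n x (Suc v)) = 0")
  case True
  then obtain S where S: "S \<subseteq> {1..n}" "H1 = side_haplotype n S" "H2 = side_haplotype n (- S)"
    by (rule side_haplotypes_if_block_costs_zero[OF assms(2,3)])
  have "matrix_cost H1 H2 (reduction_matrix n E) + 2 * cut_size E S = n * card E"
    unfolding S(2,3) by (rule matrix_cost_side_haplotypes[OF assms(1)])
  with cut_size_le_max_cut[OF S(1), of E] show ?thesis
    by linarith
next
  case False
  then obtain v x where v: "v < n" "x \<in> {Zero, One}"
    and positive: "row_cost H1 H2 (block_row n x (Suc v)) \<noteq> 0"
    by blast
  let ?k = "2 * card E * n ^ 2"
  have "1 \<le> (\<Sum>u<n. row_cost H1 H2 (block_row n x (Suc u)))"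
    using member_le_sum[of v "{..<n}" "\<lambda>u. row_cost H1 H2 (block_row n x (Suc u))"] v positive
    by simp
  then have "?k div n \<le> matrix_cost H1 H2 (block_part n ?k x)"
    by (simp add: matrix_cost_block_part)
  also have "\<dots> \<le> matrix_cost H1 H2 (reduction_matrix n E)"
    using v(2) by (auto simp: matrix_cost_reduction_matrix)
  finally have "?k div n \<le> matrix_cost H1 H2 (reduction_matrix n E)" .
  moreover have "n * card E \<le> ?k div n"
    using v(1) by (simp add: power2_eq_square)
  ultimately show ?thesis
    by linarith
qed

lemma ungapped_MEC_reduction_matrix:
  assumes "simple_graph n E"
  shows "ungapped_MEC (2 * n) (reduction_matrix n E) + 2 * max_cut n E = n * card E"
proof -
  obtain S where S: "S \<subseteq> {1..n}" "cut_size E S = max_cut n E"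
    by (rule max_cut_attained)
  let ?H1 = "side_haplotype n S" and ?H2 = "side_haplotype n (- S)"
  have optimum: "matrix_cost ?H1 ?H2 (reduction_matrix n E) + 2 * max_cut n E = n * card E"
    using matrix_cost_side_haplotypes[OF assms, of S] S(2) by simp
  have "ungapped_MEC (2 * n) (reduction_matrix n E) = matrix_cost ?H1 ?H2 (reduction_matrix n E)"
  proof (rule ungapped_MEC_eqI)
    fix G1 G2 :: "bool list"
    assume "length G1 = 2 * n" "length G2 = 2 * n"
    then have "n * card E \<le> matrix_cost G1 G2 (reduction_matrix n E) + 2 * max_cut n E"
      by (rule matrix_cost_reduction_matrix_lower[OF assms])
    with optimum show "matrix_cost ?H1 ?H2 (reduction_matrix n E)
        \<le> matrix_cost G1 G2 (reduction_matrix n E)"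
      by linarith
  qed (simp_all add: length_reduction_matrix_row)
  with optimum show ?thesis
    by simp
qed

theorem mainTheorem2:
  fixes n :: nat and E :: "nat set set"
  assumes "simple_graph n E"
  shows "ungapped (reduction_matrix n E) \<and>
    int (ungapped_MEC (2 * n) (reduction_matrix n E)) =
      int (card E) * (int n - 2) + 2 * (int (card E) - int (max_cut n E))"
proof
  show "ungapped (reduction_matrix n E)"
    by (rule ungapped_reduction_matrix)
  have "int (ungapped_MEC (2 * n) (reduction_matrix n E)) + 2 * int (max_cut n E) =
      int n * int (card E)"
    using arg_cong[OF ungapped_MEC_reduction_matrix[OF assms], of int] by simp
  then show "int (ungapped_MEC (2 * n) (reduction_matrix n E)) =
      int (card E) * (int n - 2) + 2 * (int (card E) - int (max_cut n E))"
    by (simp add: algebra_simps)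
qed

end
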